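(* Let $\lambda_1,\dots,\lambda_n$ be ordinals with $\operatorname{cf}(\lambda_i)\neq\omega$ for all $i$, and put $X=\lambda_1\times\cdots\times\lambda_n$ (product of order topologies). For every finite partition $\mathcal A$ of $X$ into clopen sets there are finite subsets $F_i\subseteq\lambda_i$ ($i=1,\dots,n$) such that the grid partition $\mathcal G^X_{\{F_i\}_{i=1}^n}$ is a refinement of $\mathcal A$.
   Context: For an ordinal $\lambda$ and a finite subset $F=\{x_1<\cdots<x_N\}\subseteq\lambda$, the grid partition of $\lambda$ with respect to $F$ is $\mathcal G^\lambda_F=\{[0,x_1]\}\cup\{[x_j+1,x_{j+1}]\mid j=1,\dots,N-1\}\cup\{[x_N+1,\cdot)\}$, where $[\alpha,\beta]=\{x\in\lambda\mid\alpha\leq x\leq\beta\}$ and $[\alpha,\cdot)=\{x\in\lambda\mid\alpha\leq x\}$ (for $F=\emptyset$ it is $\{\lambda\}$). For finite $F_i\subseteq\lambda_i$, the grid partition of $X$ is $\mathcal G^X_{\{F_i\}}=\{\prod_{i=1}^nU_i\mid U_i\in\mathcal G^{\lambda_i}_{F_i}\}$. A family $\mathcal G$ refines $\mathcal A$ if every member of $\mathcal G$ is contained in some member of $\mathcal A$. *)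

theory Defs
  imports "HOL-Analysis.Analysis"
begin

text \<open>Ordinals are modelled as initial segments (down-closed subsets) of a well-ordered type.\<close>

definition ordinal_segment :: "'a::wellorder set \<Rightarrow> bool" where
  "ordinal_segment L \<longleftrightarrow> (\<forall>x y. x \<in> L \<longrightarrow> y \<le> x \<longrightarrow> y \<in> L)"

definition ord_topology :: "'a::linorder set \<Rightarrow> 'a topology" where
  "ord_topology L = topology_generated_by
     ({L} \<union> (\<lambda>a. {y\<in>L. y < a}) ` L \<union> (\<lambda>a. {y\<in>L. a < y}) ` L)"

definition cf_omega :: "'a::linorder set \<Rightarrow> bool" where
  "cf_omega L \<longleftrightarrow> (\<exists>f::nat \<Rightarrow> 'a. (\<forall>k. f k \<in> L) \<and> strict_mono f \<and> (\<forall>x\<in>L. \<exists>k. x \<le> f k))"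

text \<open>Grid partition of L with respect to a finite F \<subseteq> L.
  [0,x1], [x_j+1, x_{j+1}] = {y. x_j < y \<le> x_{j+1}}, [x_N+1, .) = {y. x_N < y}.\<close>

definition grid1 :: "'a::wellorder set \<Rightarrow> 'a set \<Rightarrow> 'a set set" where
  "grid1 L F = (if F = {} then {L} else
     {{y\<in>L. y \<le> Min F}}
     \<union> {{y\<in>L. x < y \<and> y \<le> x'} | x x'. x \<in> F \<and> x' \<in> F \<and> x < x' \<and> \<not>(\<exists>z\<in>F. x < z \<and> z < x')}
     \<union> {{y\<in>L. Max F < y}})"

definition grid :: "nat \<Rightarrow> (nat \<Rightarrow> 'a::wellorder set) \<Rightarrow> (nat \<Rightarrow> 'a set) \<Rightarrow> (nat \<Rightarrow> 'a) set set" where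
  "grid n L F = {PiE {..<n} U | U. \<forall>i<n. U i \<in> grid1 (L i) (F i)}"

definition refines :: "'b set set \<Rightarrow> 'b set set \<Rightarrow> bool" where
  "refines G A \<longleftrightarrow> (\<forall>g\<in>G. \<exists>a\<in>A. g \<subseteq> a)"

definition finite_partition :: "'b set \<Rightarrow> 'b set set \<Rightarrow> bool" where
  "finite_partition X A \<longleftrightarrow> finite A \<and> \<Union>A = X \<and> {} \<notin> A \<and>
     (\<forall>a\<in>A. \<forall>b\<in>A. a \<noteq> b \<longrightarrow> a \<inter> b = {})"

end

theory Submission
  imports Defs
begin

text \<open>Call x a change point of coordinate i if moving the i-th coordinate of some point
  from x to its successor in L i changes the piece of the partition. Inside a cell of the grid
  cut at the change points, moving along coordinate i never changes the piece: successor steps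
  by definition, limit steps because the piece containing the limit point is open, so that
  transfinite induction applies; changing the coordinates one at a time, whole cells lie in a
  single piece. Finiteness of the change points is where cf \<noteq> \<omega> enters: from infinitely
  many change points in coordinate i one extracts a sequence of pairs of points, adjacent along
  coordinate i and in different pieces, whose interleaving is monotone in every coordinate.
  Monotone sequences converge when the cofinality is not \<omega> (they either stabilise or converge
  to their supremum, which stays below the ordinal), and an open piece containing the limit
  eventually contains both members of a pair.\<close>

lemma topspace_ord_topology [simp]: "topspace (ord_topology L) = L"
  unfolding ord_topology_def by auto

lemma ord_subbasis_left_interval:
  fixes L :: "'a::linorder set"
  assumes S: "S \<in> {L} \<union> (\<lambda>a. {y\<in>L. y < a}) ` L \<union> (\<lambda>a. {y\<in>L. a < y}) ` L"
    and l: "l \<in> S" and bl: "b < l" and no_pred: "\<forall>z. b \<le> z \<and> z < l \<longrightarrow> (\<exists>w. z < w \<and> w < l)"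
  shows "\<exists>c. b \<le> c \<and> c < l \<and> {z \<in> L. c \<le> z \<and> z < l} \<subseteq> S"
proof -
  from S consider "S = L" | a where "S = {y\<in>L. y < a}" | a where "S = {y\<in>L. a < y}"
    by auto
  then show ?thesis
  proof cases
    case (3 a)
    show ?thesis
    proof (cases "a < b")
      case False
      with 3 l no_pred obtain w where "a < w" "w < l" by (auto simp: not_less)
      with 3 False show ?thesis by (intro exI[of _ w]) auto
    qed (use 3 bl in auto)
  qed (use l bl in auto)
qed

lemma openin_ord_topology_left_interval:
  fixes L :: "'a::linorder set"
  assumes "openin (ord_topology L) U" "l \<in> U" "b < l"
    and "\<And>z. b \<le> z \<Longrightarrow> z < l \<Longrightarrow> \<exists>w. z < w \<and> w < l"
  shows "\<exists>c. b \<le> c \<and> c < l \<and> {z \<in> L. c \<le> z \<and> z < l} \<subseteq> U"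
proof -
  have "\<forall>l\<in>U. \<forall>b. b < l \<longrightarrow> (\<forall>z. b \<le> z \<and> z < l \<longrightarrow> (\<exists>w. z < w \<and> w < l)) \<longrightarrow>
          (\<exists>c. b \<le> c \<and> c < l \<and> {z \<in> L. c \<le> z \<and> z < l} \<subseteq> U)"
    using assms(1) unfolding ord_topology_def openin_topology_generated_by_iff
  proof (induction rule: generate_topology_on.induct)
    case (Int U V)
    show ?case
    proof (intro ballI allI impI)
      fix l b assume l: "l \<in> U \<inter> V" and bl: "b < l"
        and no_pred: "\<forall>z. b \<le> z \<and> z < l \<longrightarrow> (\<exists>w. z < w \<and> w < l)"
      obtain c where "b \<le> c" "c < l" "{z \<in> L. c \<le> z \<and> z < l} \<subseteq> U"
        using Int.IH(1) l bl no_pred by blast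
      moreover obtain d where "b \<le> d" "d < l" "{z \<in> L. d \<le> z \<and> z < l} \<subseteq> V"
        using Int.IH(2) l bl no_pred by blast
      ultimately show "\<exists>c. b \<le> c \<and> c < l \<and> {z \<in> L. c \<le> z \<and> z < l} \<subseteq> U \<inter> V"
        by (intro exI[of _ "max c d"]) (auto simp: le_max_iff_disj)
    qed
  next
    case (UN K)
    show ?case
    proof (intro ballI allI impI)
      fix l b assume "l \<in> \<Union>K" and bl: "b < l"
        and no_pred: "\<forall>z. b \<le> z \<and> z < l \<longrightarrow> (\<exists>w. z < w \<and> w < l)"
      then obtain V where V: "V \<in> K" "l \<in> V" by blast
      then obtain c where "b \<le> c" "c < l" "{z \<in> L. c \<le> z \<and> z < l} \<subseteq> V"
        using UN.IH bl no_pred by blast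
      with V show "\<exists>c. b \<le> c \<and> c < l \<and> {z \<in> L. c \<le> z \<and> z < l} \<subseteq> \<Union>K"
        by blast
    qed
  next
    case (Basis S)
    then show ?case by (intro ballI allI impI) (rule ord_subbasis_left_interval)
  qed simp
  with assms show ?thesis by blast
qed

lemma decseq_eventually_const:
  fixes g :: "nat \<Rightarrow> 'a::wellorder"
  assumes "decseq g"
  shows "\<exists>N. \<forall>k\<ge>N. g k = g N"
proof -
  obtain N where N: "g N = (LEAST x. x \<in> range g)"
    using LeastI[of "\<lambda>x. x \<in> range g" "g 0"] by auto
  have "g N \<le> g k" for k
    unfolding N by (simp add: Least_le)
  then have "g k = g N" if "N \<le> k" for k
    using decseqD[OF assms that] by (simp add: antisym)
  then show ?thesis by blast
qed

lemma cf_omega_if_cofinal_seq: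
  fixes L :: "'a::linorder set" and g :: "nat \<Rightarrow> 'a"
  assumes no_max: "\<And>x. x \<in> L \<Longrightarrow> \<exists>y\<in>L. x < y" and g: "\<And>k. g k \<in> L"
    and cofinal: "\<And>x. x \<in> L \<Longrightarrow> \<exists>k. x \<le> g k"
  shows "cf_omega L"
proof -
  define above where "above x = (SOME y. y \<in> L \<and> x < y)" for x
  have above: "above x \<in> L \<and> x < above x" if "x \<in> L" for x
    unfolding above_def using someI_ex[of "\<lambda>y. y \<in> L \<and> x < y"] no_max[OF that] by blast
  define f where "f = rec_nat (g 0) (\<lambda>k y. above (max y (g (Suc k))))"
  have f_Suc: "f (Suc k) = above (max (f k) (g (Suc k)))" for k
    unfolding f_def by simp
  have f: "f k \<in> L \<and> g k \<le> f k" for k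
  proof (induction k)
    case 0
    then show ?case using g by (simp add: f_def)
  next
    case (Suc k)
    then have "max (f k) (g (Suc k)) \<in> L" using g by (simp add: max_def)
    then show ?case
      unfolding f_Suc using above max.strict_boundedE less_imp_le by blast
  qed
  have "f k < f (Suc k)" for k
  proof -
    have "max (f k) (g (Suc k)) \<in> L" using f g by (simp add: max_def)
    then show ?thesis
      unfolding f_Suc using above max.strict_boundedE by blast
  qed
  then have "strict_mono f" by (simp add: strict_mono_Suc_iff)
  moreover have "\<exists>k. x \<le> f k" if "x \<in> L" for x
    using cofinal[OF that] f order_trans by blast
  ultimately show ?thesis
    unfolding cf_omega_def using f by blast
qed

lemma limitin_ord_topology_incseq_Sup:
  fixes L :: "'a::linorder set" and g :: "nat \<Rightarrow> 'a"
  assumes "incseq g" "\<And>k. g k \<in> L" "l \<in> L" "\<And>k. g k < l" and sup: "\<And>a. a < l \<Longrightarrow> \<exists>k. a < g k"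
  shows "limitin (ord_topology L) g l sequentially"
  unfolding limitin_def
proof (intro conjI allI impI)
  show "l \<in> topspace (ord_topology L)" using assms by simp
  fix U assume "openin (ord_topology L) U \<and> l \<in> U"
  moreover have "\<exists>w. z < w \<and> w < l" if "z < l" for z
    using sup[OF that] assms(4) by blast
  ultimately obtain c where "c < l" and c: "{z \<in> L. c \<le> z \<and> z < l} \<subseteq> U"
    using openin_ord_topology_left_interval[of L U l "g 0"] assms(4) by blast
  then obtain k0 where "c < g k0" using sup by blast
  then have "g k \<in> U" if "k0 \<le> k" for k
    using c assms(2,4) incseqD[OF assms(1) that] by fastforce
  then show "\<forall>\<^sub>F k in sequentially. g k \<in> U"
    unfolding eventually_sequentially by blast
qed

lemma limitin_sequentially_eventually_const:
  "l \<in> topspace X \<Longrightarrow> \<forall>k\<ge>N. g k = l \<Longrightarrow> limitin X g l sequentially"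
  by (rule limitin_eventually) (auto simp: eventually_sequentially)

lemma incseq_bounded_limitin_ord_topology:
  fixes L :: "'a::wellorder set" and g :: "nat \<Rightarrow> 'a"
  assumes seg: "ordinal_segment L" and inc: "incseq g" and g: "\<And>k. g k \<in> L"
    and bounded: "\<exists>x. x \<in> L \<and> (\<forall>k. g k \<le> x)"
  shows "\<exists>l\<in>L. limitin (ord_topology L) g l sequentially"
proof -
  define l where "l = (LEAST x. x \<in> L \<and> (\<forall>k. g k \<le> x))"
  have l: "l \<in> L" "\<And>k. g k \<le> l"
    using LeastI_ex[OF bounded] unfolding l_def by blast+
  show ?thesis
  proof (cases "\<exists>N. g N = l")
    case True
    then obtain N where "g N = l" ..
    then have "\<forall>k\<ge>N. g k = l"
      using incseqD[OF inc] l(2) antisym by metis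
    then have "limitin (ord_topology L) g l sequentially"
      by (rule limitin_sequentially_eventually_const[rotated]) (simp add: l(1))
    with l(1) show ?thesis by blast
  next
    case False
    have "\<exists>k. a < g k" if "a < l" for a
    proof (rule ccontr)
      assume "\<not> ?thesis"
      moreover have "a \<in> L"
        using seg l(1) that unfolding ordinal_segment_def by auto
      ultimately have "l \<le> a"
        unfolding l_def by (intro Least_le) (simp add: not_less)
      with that show False by simp
    qed
    moreover have "g k < l" for k
      using False l(2) order_less_le by blast
    ultimately show ?thesis
      using limitin_ord_topology_incseq_Sup[OF inc g l(1)] l(1) by blast
  qed
qed

lemma monoseq_limitin_ord_topology:
  fixes L :: "'a::wellorder set" and g :: "nat \<Rightarrow> 'a"
  assumes seg: "ordinal_segment L" and not_cf: "\<not> cf_omega L" and g: "\<And>k. g k \<in> L"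
    and "monoseq g"
  shows "\<exists>l\<in>L. limitin (ord_topology L) g l sequentially"
proof (cases "decseq g")
  case True
  then obtain N where "\<forall>k\<ge>N. g k = g N"
    using decseq_eventually_const by blast
  then have "limitin (ord_topology L) g (g N) sequentially"
    by (rule limitin_sequentially_eventually_const[rotated]) (simp add: g)
  with g show ?thesis by blast
next
  case False
  with \<open>monoseq g\<close> have inc: "incseq g" by (simp add: monoseq_iff)
  show ?thesis
  proof (rule incseq_bounded_limitin_ord_topology[OF seg inc g], rule ccontr)
    assume "\<nexists>x. x \<in> L \<and> (\<forall>k. g k \<le> x)"
    then have above: "\<exists>k. x < g k" if "x \<in> L" for x
      using that by (auto simp: not_le)
    have "\<exists>y\<in>L. x < y" if "x \<in> L" for x
      using above[OF that] g by blast
    moreover have "\<exists>k. x \<le> g k" if "x \<in> L" for x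
      using above[OF that] less_imp_le by blast
    ultimately have "cf_omega L"
      by (rule cf_omega_if_cofinal_seq[OF _ g])
    with not_cf show False ..
  qed
qed

lemma limitin_product_ord_topology_monoseq:
  fixes L :: "'i \<Rightarrow> 'a::wellorder set" and r :: "nat \<Rightarrow> 'i \<Rightarrow> 'a"
  assumes "\<And>i. i \<in> I \<Longrightarrow> ordinal_segment (L i)" "\<And>i. i \<in> I \<Longrightarrow> \<not> cf_omega (L i)"
    and r: "\<And>m. r m \<in> PiE I L" and "\<And>i. i \<in> I \<Longrightarrow> monoseq (\<lambda>m. r m i)"
  shows "\<exists>q. limitin (product_topology (\<lambda>i. ord_topology (L i)) I) r q sequentially"
proof -
  have "\<exists>l. limitin (ord_topology (L i)) (\<lambda>m. r m i) l sequentially" if "i \<in> I" for i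
    using monoseq_limitin_ord_topology[OF assms(1,2)[OF that] _ assms(4)[OF that]] r that
    by (meson PiE_mem)
  then obtain l where l: "\<And>i. i \<in> I \<Longrightarrow> limitin (ord_topology (L i)) (\<lambda>m. r m i) (l i) sequentially"
    by metis
  have "limitin (product_topology (\<lambda>i. ord_topology (L i)) I) r (restrict l I) sequentially"
    unfolding limitin_componentwise using l r by simp
  then show ?thesis by blast
qed

lemma monoseq_comp_strict_mono:
  assumes "monoseq g" "strict_mono h"
  shows "monoseq (g \<circ> h)"
  using assms unfolding monoseq_def by (auto simp: strict_mono_less_eq)

lemma common_monotone_subseq:
  fixes s :: "nat \<Rightarrow> nat \<Rightarrow> 'a::linorder"
  shows "\<exists>h. strict_mono h \<and> (\<forall>j<m. monoseq (\<lambda>k. s (h k) j))"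
proof (induction m)
  case 0
  show ?case using strict_mono_id by blast
next
  case (Suc m)
  then obtain h where h: "strict_mono h" "\<forall>j<m. monoseq (\<lambda>k. s (h k) j)" by blast
  obtain f where f: "strict_mono f" "monoseq (\<lambda>k. s (h (f k)) m)"
    using seq_monosub[of "\<lambda>k. s (h k) m"] by blast
  have "monoseq (\<lambda>k. s (h (f k)) j)" if "j < Suc m" for j
  proof (cases "j = m")
    case False
    with that have "j < m" by simp
    then have "monoseq ((\<lambda>k. s (h k) j) \<circ> f)"
      using monoseq_comp_strict_mono[OF _ f(1)] h(2) by blast
    then show ?thesis by (simp add: o_def)
  qed (use f(2) in simp)
  then show ?case
    using strict_mono_o[OF h(1) f(1)] by (auto simp: o_def)
qed

definition interleave :: "(nat \<Rightarrow> 'a) \<Rightarrow> (nat \<Rightarrow> 'a) \<Rightarrow> nat \<Rightarrow> 'a" where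
  "interleave u v m = (if even m then u (m div 2) else v (m div 2))"

lemma interleave_even [simp]: "interleave u v (2 * k) = u k"
  and interleave_odd [simp]: "interleave u v (Suc (2 * k)) = v k"
  by (simp_all add: interleave_def)

lemma interleave_apply: "interleave u v m j = interleave (\<lambda>k. u k j) (\<lambda>k. v k j) m"
  by (simp add: interleave_def)

lemma monoseq_interleave:
  fixes u v :: "nat \<Rightarrow> 'a::order"
  assumes "(\<forall>k. u k \<le> v k \<and> v k \<le> u (Suc k)) \<or> (\<forall>k. v k \<le> u k \<and> u (Suc k) \<le> v k)"
  shows "monoseq (interleave u v)"
proof -
  have Suc_half: "Suc m div 2 = (if even m then m div 2 else Suc (m div 2))" for m :: nat
    by presburger
  show ?thesis
    unfolding monoseq_Suc using assms by (auto simp: interleave_def Suc_half)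
qed

lemma monoseq_interleave_self: "monoseq u \<Longrightarrow> monoseq (interleave u u)"
  by (intro monoseq_interleave) (auto simp: monoseq_Suc)

lemma continuous_map_fun_upd_product_topology:
  assumes "q \<in> topspace (product_topology X I)" "i \<in> I"
  shows "continuous_map (X i) (product_topology X I) (\<lambda>t. q(i := t))"
  unfolding continuous_map_componentwise
proof (intro conjI ballI)
  show "(\<lambda>t. q(i := t)) ` topspace (X i) \<subseteq> extensional I"
    using assms by (auto simp: PiE_iff extensional_def)
  fix k assume "k \<in> I"
  then show "continuous_map (X i) (X k) (\<lambda>t. (q(i := t)) k)"
    using assms by (cases "k = i") (auto simp: PiE_iff)
qed

definition succ_in :: "'a::wellorder set \<Rightarrow> 'a \<Rightarrow> 'a" where
  "succ_in L x = (LEAST y. y \<in> L \<and> x < y)"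

lemma succ_in:
  assumes "y \<in> L" "x < y"
  shows "succ_in L x \<in> L" "x < succ_in L x" "succ_in L x \<le> y"
  using LeastI[of "\<lambda>y. y \<in> L \<and> x < y" y] Least_le[of "\<lambda>y. y \<in> L \<and> x < y" y] assms
  unfolding succ_in_def by auto

lemma succ_in_eqI:
  assumes "y \<in> L" "x < y" "\<And>w. w \<in> L \<Longrightarrow> x < w \<Longrightarrow> y \<le> w"
  shows "succ_in L x = y"
  unfolding succ_in_def using assms by (intro Least_equality) auto

lemma grid1_subset: "I \<in> grid1 L F \<Longrightarrow> I \<subseteq> L"
  unfolding grid1_def by (auto split: if_splits)

lemma grid1_convex:
  assumes "I \<in> grid1 L F" "x \<in> I" "y \<in> I" "x \<le> z" "z \<le> y" "z \<in> L"
  shows "z \<in> I"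
  using assms unfolding grid1_def
  by (auto split: if_splits dest: order.strict_trans2 order.trans)

lemma grid1_notin_cut_points:
  assumes "I \<in> grid1 L F" "finite F" "x \<in> I" "y \<in> I" "x < y"
  shows "x \<notin> F"
proof
  assume x: "x \<in> F"
  then have "F \<noteq> {}" "Min F \<le> x" "x \<le> Max F"
    using assms(2) by auto
  with assms(1) consider "I = {y\<in>L. y \<le> Min F}"
    | u u' where "I = {y\<in>L. u < y \<and> y \<le> u'}" "\<not> (\<exists>z\<in>F. u < z \<and> z < u')"
    | "I = {y\<in>L. Max F < y}"
    unfolding grid1_def by auto
  then show False
  proof cases
    case 1
    then show ?thesis using assms(4,5) \<open>Min F \<le> x\<close> by auto
  next
    case 2
    then show ?thesis using assms(3-5) x by auto
  next
    case 3
    then show ?thesis using assms(3) \<open>x \<le> Max F\<close> by auto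
  qed
qed

lemma PiE_fun_upd_mem: "p \<in> PiE I L \<Longrightarrow> i \<in> I \<Longrightarrow> t \<in> L i \<Longrightarrow> p(i := t) \<in> PiE I L"
  by (metis PiE_fun_upd insert_absorb)

locale ordinal_box_open_partition =
  fixes n :: nat and L :: "nat \<Rightarrow> 'a::wellorder set" and A :: "(nat \<Rightarrow> 'a) set set"
  assumes segment: "\<And>i. i < n \<Longrightarrow> ordinal_segment (L i)"
    and Union_pieces: "\<Union>A = PiE {..<n} L"
    and disjoint_pieces: "\<And>a b. a \<in> A \<Longrightarrow> b \<in> A \<Longrightarrow> a \<noteq> b \<Longrightarrow> a \<inter> b = {}"
    and openin_pieces: "\<And>a. a \<in> A \<Longrightarrow> openin (product_topology (\<lambda>i. ord_topology (L i)) {..<n}) a"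
begin

definition same_piece :: "(nat \<Rightarrow> 'a) \<Rightarrow> (nat \<Rightarrow> 'a) \<Rightarrow> bool" where
  "same_piece p q \<longleftrightarrow> (\<exists>a\<in>A. p \<in> a \<and> q \<in> a)"

lemma same_piece_refl: "p \<in> PiE {..<n} L \<Longrightarrow> same_piece p p"
  using Union_pieces unfolding same_piece_def by blast

lemma same_piece_sym: "same_piece p q \<Longrightarrow> same_piece q p"
  unfolding same_piece_def by blast

lemma same_piece_mem: "a \<in> A \<Longrightarrow> p \<in> a \<Longrightarrow> same_piece p q \<Longrightarrow> q \<in> a"
  unfolding same_piece_def using disjoint_pieces by blast

lemma same_piece_trans: "same_piece p q \<Longrightarrow> same_piece q r \<Longrightarrow> same_piece p r"
  unfolding same_piece_def using disjoint_pieces by blast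

definition change_points :: "nat \<Rightarrow> 'a set" where
  "change_points i = {x \<in> L i. (\<exists>y\<in>L i. x < y) \<and>
     (\<exists>p \<in> PiE {..<n} L. \<not> same_piece (p(i := x)) (p(i := succ_in (L i) x)))}"

lemma same_piece_left_interval:
  assumes i: "i < n" and q: "q \<in> PiE {..<n} L" and y: "y \<in> L i" and "b < y"
    and "\<And>z. b \<le> z \<Longrightarrow> z < y \<Longrightarrow> \<exists>w. z < w \<and> w < y"
  shows "\<exists>c. b \<le> c \<and> c < y \<and> (\<forall>z\<in>L i. c \<le> z \<and> z < y \<longrightarrow> same_piece (q(i := z)) (q(i := y)))"
proof -
  obtain a where a: "a \<in> A" "q(i := y) \<in> a"
    using Union_pieces PiE_fun_upd_mem[OF q _ y] i by blast
  define V where "V = {t \<in> topspace (ord_topology (L i)). q(i := t) \<in> a}"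
  have "openin (ord_topology (L i)) V"
    unfolding V_def using q i
    by (intro openin_continuous_map_preimage[OF continuous_map_fun_upd_product_topology
          openin_pieces[OF a(1)]]) simp_all
  then obtain c where "b \<le> c" "c < y" "{z \<in> L i. c \<le> z \<and> z < y} \<subseteq> V"
    using openin_ord_topology_left_interval[of "L i" V y b] assms(4,5) y a(2) unfolding V_def by auto
  then show ?thesis
    using a unfolding V_def same_piece_def by blast
qed

lemma same_piece_fun_upd_upward:
  assumes i: "i < n" and I: "I \<in> grid1 (L i) (change_points i)" and fin: "finite (change_points i)"
    and q: "q \<in> PiE {..<n} L" "q i \<in> I"
  shows "y \<in> I \<Longrightarrow> q i \<le> y \<Longrightarrow> same_piece q (q(i := y))"
proof (induction y rule: less_induct)
  case (less y)
  have y: "y \<in> L i" using less.prems grid1_subset[OF I] by auto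
  have in_cell: "z \<in> I \<and> z \<in> L i" if "q i \<le> z" "z \<le> y" for z
  proof -
    have "z \<in> L i" using segment[OF i] y that(2) unfolding ordinal_segment_def by blast
    then show ?thesis using grid1_convex[OF I q(2) less.prems(1) that] by blast
  qed
  consider "y = q i"
    | z where "q i \<le> z" "z < y" "\<not> (\<exists>w. z < w \<and> w < y)"
    | "q i < y" "\<And>z. q i \<le> z \<Longrightarrow> z < y \<Longrightarrow> \<exists>w. z < w \<and> w < y"
    using less.prems(2) order_le_less by blast
  then show ?case
  proof cases
    case 1
    then show ?thesis using same_piece_refl[OF q(1)] by simp
  next
    case (2 z)
    have z: "z \<in> I" "z \<in> L i" using in_cell 2 by auto
    have "succ_in (L i) z = y"
      by (rule succ_in_eqI) (use y 2 leI in blast)+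
    moreover have "z \<notin> change_points i"
      using grid1_notin_cut_points[OF I fin z(1) less.prems(1) 2(2)] .
    ultimately have "same_piece (q(i := z)) (q(i := y))"
      using z(2) y 2(2) q(1) unfolding change_points_def by auto
    moreover have "same_piece q (q(i := z))"
      using less.IH[OF 2(2)] z(1) 2(1) by blast
    ultimately show ?thesis using same_piece_trans by blast
  next
    case 3
    then obtain c where c: "q i \<le> c" "c < y"
      and "\<forall>z\<in>L i. c \<le> z \<and> z < y \<longrightarrow> same_piece (q(i := z)) (q(i := y))"
      using same_piece_left_interval[OF i q(1) y] by blast
    moreover have "c \<in> I" "c \<in> L i" using in_cell c by auto
    moreover have "same_piece q (q(i := c))"
      using less.IH[OF c(2)] \<open>c \<in> I\<close> c(1) by blast
    ultimately show ?thesis using same_piece_trans by blast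
  qed
qed

lemma same_piece_fun_upd_in_cell:
  assumes i: "i < n" and I: "I \<in> grid1 (L i) (change_points i)" and fin: "finite (change_points i)"
    and q: "q \<in> PiE {..<n} L" "q i \<in> I" and y: "y \<in> I"
  shows "same_piece q (q(i := y))"
proof (cases "q i \<le> y")
  case True
  then show ?thesis using same_piece_fun_upd_upward[OF i I fin q y] by blast
next
  case False
  have "q(i := y) \<in> PiE {..<n} L"
    using PiE_fun_upd_mem[OF q(1)] i y grid1_subset[OF I] by blast
  then have "same_piece (q(i := y)) ((q(i := y))(i := q i))"
    by (rule same_piece_fun_upd_upward[OF i I fin]) (use y q(2) False in auto)
  then show ?thesis using same_piece_sym by simp
qed

lemma same_piece_grid_cell:
  assumes U: "\<And>i. i < n \<Longrightarrow> U i \<in> grid1 (L i) (change_points i)"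
    and fin: "\<And>i. i < n \<Longrightarrow> finite (change_points i)"
    and p: "p \<in> PiE {..<n} U" and p': "p' \<in> PiE {..<n} U"
  shows "same_piece p p'"
proof -
  define r where "r m = (\<lambda>j. if j < m then p' j else p j)" for m
  have r: "r m \<in> PiE {..<n} U" for m
    using p p' unfolding r_def by (auto simp: PiE_iff extensional_def)
  have cells_in_box: "PiE {..<n} U \<subseteq> PiE {..<n} L"
    using grid1_subset[OF U] by (intro PiE_mono) blast
  have "same_piece p (r m)" if "m \<le> n" for m
    using that
  proof (induction m)
    case 0
    then show ?case using p cells_in_box same_piece_refl by (auto simp: r_def)
  next
    case (Suc m)
    then have "m < n" by simp
    have "r (Suc m) = (r m)(m := p' m)"
      unfolding r_def by auto
    moreover have "same_piece (r m) ((r m)(m := p' m))"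
      using same_piece_fun_upd_in_cell[OF \<open>m < n\<close> U fin subsetD[OF cells_in_box r]]
        PiE_mem[OF r] PiE_mem[OF p'] \<open>m < n\<close> by blast
    moreover have "same_piece p (r m)"
      using Suc by simp
    ultimately show ?case
      using same_piece_trans by metis
  qed
  moreover have "r n = p'"
    using p p' unfolding r_def by (auto simp: PiE_iff extensional_def)
  ultimately show ?thesis by auto
qed

lemma refines_grid_change_points:
  assumes fin: "\<And>i. i < n \<Longrightarrow> finite (change_points i)" and nonempty: "\<And>i. i < n \<Longrightarrow> L i \<noteq> {}"
  shows "refines (grid n L change_points) A"
  unfolding refines_def grid_def
proof clarify
  fix U assume U: "\<forall>i<n. U i \<in> grid1 (L i) (change_points i)"
  show "\<exists>a\<in>A. PiE {..<n} U \<subseteq> a"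
  proof (cases "PiE {..<n} U = {}")
    case True
    have "PiE {..<n} L \<noteq> {}"
      using nonempty by (simp add: PiE_eq_empty_iff)
    then have "A \<noteq> {}"
      using Union_pieces by auto
    with True show ?thesis by blast
  next
    case False
    then obtain p where p: "p \<in> PiE {..<n} U" by blast
    moreover have "PiE {..<n} U \<subseteq> PiE {..<n} L"
      using grid1_subset U by (intro PiE_mono) blast
    ultimately have "p \<in> PiE {..<n} L" by blast
    then obtain a where a: "a \<in> A" "p \<in> a"
      using Union_pieces by blast
    have "x \<in> a" if "x \<in> PiE {..<n} U" for x
      using same_piece_mem[OF a same_piece_grid_cell[OF U[rule_format] fin p that]] .
    with a(1) show ?thesis by blast
  qed
qed

lemma eventually_same_piece_if_monoseq:
  assumes not_cf: "\<And>j. j < n \<Longrightarrow> \<not> cf_omega (L j)"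
    and r: "\<And>m. r m \<in> PiE {..<n} L" and mono: "\<And>j. j < n \<Longrightarrow> monoseq (\<lambda>m. r m j)"
  shows "\<exists>N. \<forall>m\<ge>N. \<forall>m'\<ge>N. same_piece (r m) (r m')"
proof -
  obtain q where lim: "limitin (product_topology (\<lambda>i. ord_topology (L i)) {..<n}) r q sequentially"
    using limitin_product_ord_topology_monoseq[of "{..<n}" L r] segment not_cf r mono by blast
  then have "q \<in> PiE {..<n} L"
    using limitin_topspace by fastforce
  then obtain a where a: "a \<in> A" "q \<in> a"
    using Union_pieces by blast
  then have "eventually (\<lambda>m. r m \<in> a) sequentially"
    using lim openin_pieces[OF a(1)] unfolding limitin_def by blast
  then show ?thesis
    using a(1) unfolding eventually_sequentially same_piece_def by blast
qed

lemma finite_change_points: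
  assumes i: "i < n" and not_cf: "\<And>j. j < n \<Longrightarrow> \<not> cf_omega (L j)"
  shows "finite (change_points i)"
proof (rule ccontr)
  assume inf: "infinite (change_points i)"
  define d where "d = enumerate (change_points i)"
  define s where "s k = succ_in (L i) (d k)" for k
  have d: "d k \<in> change_points i" for k
    unfolding d_def using enumerate_in_set[OF inf] .
  have d_mono: "d k < d k'" if "k < k'" for k k'
    unfolding d_def using enumerate_mono[OF that inf] .
  have "\<exists>p \<in> PiE {..<n} L. \<not> same_piece (p(i := d k)) (p(i := s k))" for k
    using d[of k] unfolding change_points_def s_def by blast
  then obtain p where p: "\<And>k. p k \<in> PiE {..<n} L"
    and change: "\<And>k. \<not> same_piece ((p k)(i := d k)) ((p k)(i := s k))"
    by metis
  have d_L: "d k \<in> L i" and s: "s k \<in> L i" "d k < s k" for k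
    using d[of k] succ_in[of _ "L i" "d k"] unfolding change_points_def s_def by auto
  have s_le: "s k \<le> d k'" if "k < k'" for k k'
    unfolding s_def using succ_in(3)[OF d_L d_mono[OF that]] .
  define P where "P k = (p k)(i := d k)" for k
  define P' where "P' k = (p k)(i := s k)" for k
  obtain h where h: "strict_mono h" "\<forall>j<n. monoseq (\<lambda>k. P (h k) j)"
    using common_monotone_subseq by blast
  define r where "r = interleave (P \<circ> h) (P' \<circ> h)"
  have r: "r m \<in> PiE {..<n} L" for m
    using PiE_fun_upd_mem[OF p _ d_L] PiE_fun_upd_mem[OF p _ s(1)] i
    by (simp add: r_def interleave_def P_def P'_def)
  have mono: "monoseq (\<lambda>m. r m j)" if "j < n" for j
  proof (cases "j = i")
    case True
    have "d (h k) \<le> s (h k) \<and> s (h k) \<le> d (h (Suc k))" for k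
      using s(2) s_le h(1) by (simp add: less_imp_le strict_mono_Suc_iff)
    then show ?thesis
      unfolding r_def interleave_apply using True
      by (intro monoseq_interleave) (simp add: P_def P'_def)
  next
    case False
    then have "(\<lambda>k. P' (h k) j) = (\<lambda>k. P (h k) j)"
      by (simp add: P_def P'_def)
    then show ?thesis
      unfolding r_def interleave_apply
      using monoseq_interleave_self[OF h(2)[rule_format, OF that]] by (simp add: o_def)
  qed
  obtain N where "\<forall>m\<ge>N. \<forall>m'\<ge>N. same_piece (r m) (r m')"
    using eventually_same_piece_if_monoseq[of r] not_cf r mono by blast
  then have "same_piece (r (2 * N)) (r (Suc (2 * N)))"
    by simp
  with change show False
    unfolding r_def P_def P'_def by simp
qed

end

theorem theorem5p8:
  fixes n :: nat and L :: "nat \<Rightarrow> 'a::wellorder set" and \<A> :: "(nat \<Rightarrow> 'a) set set"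
  assumes ord: "\<And>i. i < n \<Longrightarrow> ordinal_segment (L i)"
    and nonzero: "\<And>i. i < n \<Longrightarrow> L i \<noteq> {}"
    and cf: "\<And>i. i < n \<Longrightarrow> \<not> cf_omega (L i)"
    and part: "finite_partition (topspace (product_topology (\<lambda>i. ord_topology (L i)) {..<n})) \<A>"
    and clopen: "\<And>a. a \<in> \<A> \<Longrightarrow>
        closedin (product_topology (\<lambda>i. ord_topology (L i)) {..<n}) a \<and>
        openin (product_topology (\<lambda>i. ord_topology (L i)) {..<n}) a"
  shows "\<exists>F. (\<forall>i<n. finite (F i) \<and> F i \<subseteq> L i) \<and> refines (grid n L F) \<A>"
proof -
  interpret ordinal_box_open_partition n L \<A>
  proof
    show "\<Union>\<A> = PiE {..<n} L"
      using part unfolding finite_partition_def by simp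
  qed (use ord part clopen in \<open>auto simp: finite_partition_def\<close>)
  have "finite (change_points i) \<and> change_points i \<subseteq> L i" if "i < n" for i
    using finite_change_points[OF that cf] unfolding change_points_def by auto
  moreover have "refines (grid n L change_points) \<A>"
    using refines_grid_change_points finite_change_points cf nonzero by blast
  ultimately show ?thesis by blast
qed

end
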